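(* For $n=4$ agents, $\hat r_4=r_4=\frac{13}{9}$, whereas $\rho_4\ge\frac{10}{7}$.
   Context: Equal responsibilities; chores $e_1,\ldots,e_m$. A picking order $S\in[n]^m$ allocates $A_i(S)=\{e_r:S_r=i\}$ to agent $i$ (equivalently, agents following greedy in the reversed picking sequence on an identically ordered instance). For additive $c_i\ge0$ with $c_i(e_1)\ge c_i(e_2)\ge\cdots$: $CS_i=\max\{\frac1nc_i(\{e_1,\ldots,e_m\}),c_i(e_1),c_i(e_n)+c_i(e_{n+1})\}$ (zeros beyond $m$) and $MMS_i=\min_{(A_1,\ldots,A_n)}\max_jc_i(A_j)$. $r_{n,m}(S)=\sup_i\sup_{c_i}c_i(A_i(S))/CS_i$, $\rho_{n,m}(S)=\sup_i\sup_{c_i}c_i(A_i(S))/MMS_i$. $r_{n,m}=\min_S r_{n,m}(S)$ and $\rho_{n,m}=\min_S\rho_{n,m}(S)$ over all picking orders of length $m$; $\hat r_{n,m}$ is the minimum of $r_{n,m}(S)$ over ridge picking orders only ($S_r=r$, $S_{n+r}=n-r+1$ for $1\le r\le n$, $m\ge2n$). $r_n=\sup_m r_{n,m}$, $\rho_n=\sup_m\rho_{n,m}$, $\hat r_n=\sup_{m\ge2n}\hat r_{n,m}$. *)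

theory Defs
  imports Complex_Main "HOL-Library.Extended_Real"
begin

text \<open>Agents are 1..n, chores are e_1..e_m (indexed 1..m).
 A picking order / assignment of chores to agents is a list S of length m
 with entries in {1..n}; chore e_r goes to agent S!(r-1).\<close>

definition picking_orders :: "nat \<Rightarrow> nat \<Rightarrow> nat list set" where
  "picking_orders n m = {S. length S = m \<and> set S \<subseteq> {1..n}}"

definition pick :: "nat list \<Rightarrow> nat \<Rightarrow> nat" where
  "pick S r = S ! (r - 1)"

definition alloc_bundle :: "nat list \<Rightarrow> nat \<Rightarrow> nat set" where
  "alloc_bundle S i = {r \<in> {1..length S}. pick S r = i}"

definition ridge_orders :: "nat \<Rightarrow> nat \<Rightarrow> nat list set" where
  "ridge_orders n m = {S \<in> picking_orders n m.
      \<forall>r\<in>{1..n}. pick S r = r \<and> pick S (n + r) = n - r + 1}"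

text \<open>Additive, nonnegative, identically ordered cost functions on chores
  e_1..e_m: c(e_1) \<ge> c(e_2) \<ge> ...; values outside 1..m are fixed to 0
  (the zeros-beyond-m convention).\<close>
definition costs :: "nat \<Rightarrow> (nat \<Rightarrow> real) set" where
  "costs m = {c. (\<forall>r\<in>{1..m}. 0 \<le> c r)
               \<and> (\<forall>r\<in>{1..m}. \<forall>s\<in>{1..m}. r \<le> s \<longrightarrow> c s \<le> c r)
               \<and> (\<forall>r. r \<notin> {1..m} \<longrightarrow> c r = 0)}"

definition CS :: "nat \<Rightarrow> nat \<Rightarrow> (nat \<Rightarrow> real) \<Rightarrow> real" where
  "CS n m c = max ((\<Sum>r\<in>{1..m}. c r) / real n) (max (c 1) (c n + c (n + 1)))"

definition MMS :: "nat \<Rightarrow> nat \<Rightarrow> (nat \<Rightarrow> real) \<Rightarrow> real" where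
  "MMS n m c = Min ((\<lambda>P. Max ((\<lambda>j. \<Sum>r\<in>alloc_bundle P j. c r) ` {1..n})) ` picking_orders n m)"

definition r_S :: "nat \<Rightarrow> nat \<Rightarrow> nat list \<Rightarrow> ereal" where
  "r_S n m S = (SUP i\<in>{1..n}. SUP c\<in>costs m. ereal ((\<Sum>r\<in>alloc_bundle S i. c r) / CS n m c))"

definition rho_S :: "nat \<Rightarrow> nat \<Rightarrow> nat list \<Rightarrow> ereal" where
  "rho_S n m S = (SUP i\<in>{1..n}. SUP c\<in>costs m. ereal ((\<Sum>r\<in>alloc_bundle S i. c r) / MMS n m c))"

definition r_nm :: "nat \<Rightarrow> nat \<Rightarrow> ereal" where
  "r_nm n m = (INF S\<in>picking_orders n m. r_S n m S)"

definition rho_nm :: "nat \<Rightarrow> nat \<Rightarrow> ereal" where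
  "rho_nm n m = (INF S\<in>picking_orders n m. rho_S n m S)"

definition r_hat_nm :: "nat \<Rightarrow> nat \<Rightarrow> ereal" where
  "r_hat_nm n m = (INF S\<in>ridge_orders n m. r_S n m S)"

definition r_n :: "nat \<Rightarrow> ereal" where
  "r_n n = (SUP m. r_nm n m)"

definition rho_n :: "nat \<Rightarrow> ereal" where
  "rho_n n = (SUP m. rho_nm n m)"

definition r_hat_n :: "nat \<Rightarrow> ereal" where
  "r_hat_n n = (SUP m\<in>{2*n..}. r_hat_nm n m)"

end

theory Submission
  imports Defs "HOL-Library.Sublist"
begin

(* Upper bound: agent i may receive at most quota i k of the first k chores, where quota i k is
   the integer part of 13/9 (a k/4 + b + d g k) for convex weights (a, b, d) depending on i and
   g k = [4 <= k] + [5 <= k]. Costs are nonincreasing, so summation by parts turns this prefix bound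
   into c(A_i) <= 13/9 (a c(all)/4 + b c(e_1) + d (c(e_4) + c(e_5))) <= 13/9 CS_i. The four quotas
   at k add up to at least k, so a greedy choice extends any admissible prefix, in particular the
   ridge 1 2 3 4 4 3 2 1, to an admissible picking order of every length.

   Lower bounds: for m = 11 (resp. 14) an adversary tree branches on every pick and ends, on every
   branch, in a leaf naming an identically ordered integer cost vector for which the agent of the
   last pick already gets at least 13/9 CS (resp., with a partition bounding MMS, 10/7 MMS). *)

lemma costs_nonneg: "c \<in> costs m \<Longrightarrow> 0 \<le> c r"
  by (cases "r \<in> {1..m}") (auto simp: costs_def)

lemma costs_antimono: "c \<in> costs m \<Longrightarrow> 1 \<le> r \<Longrightarrow> r \<le> s \<Longrightarrow> s \<le> m \<Longrightarrow> c s \<le> c r"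
  by (auto simp: costs_def)

lemma costs_outside: "c \<in> costs m \<Longrightarrow> r \<notin> {1..m} \<Longrightarrow> c r = 0"
  by (auto simp: costs_def)

lemma CS_ge_first: "c 1 \<le> CS n m c"
  by (simp add: CS_def)

lemma r_S_ge:
  assumes "i \<in> {1..n}" "c \<in> costs m"
  shows "ereal ((\<Sum>r\<in>alloc_bundle S i. c r) / CS n m c) \<le> r_S n m S"
  unfolding r_S_def by (rule SUP_upper2[OF assms(1) SUP_upper[OF assms(2)]])

lemma rho_S_ge:
  assumes "i \<in> {1..n}" "c \<in> costs m"
  shows "ereal ((\<Sum>r\<in>alloc_bundle S i. c r) / MMS n m c) \<le> rho_S n m S"
  unfolding rho_S_def by (rule SUP_upper2[OF assms(1) SUP_upper[OF assms(2)]])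

lemma r_S_le:
  assumes "0 \<le> \<alpha>"
    and bound: "\<And>i c. i \<in> {1..n} \<Longrightarrow> c \<in> costs m \<Longrightarrow> (\<Sum>r\<in>alloc_bundle S i. c r) \<le> \<alpha> * CS n m c"
  shows "r_S n m S \<le> ereal \<alpha>"
  unfolding r_S_def
proof (intro SUP_least)
  fix i c assume i: "i \<in> {1..n}" and c: "c \<in> costs m"
  have "0 \<le> CS n m c"
    using CS_ge_first costs_nonneg[OF c] order_trans by blast
  then show "ereal ((\<Sum>r\<in>alloc_bundle S i. c r) / CS n m c) \<le> ereal \<alpha>"
    using bound[OF i c] \<open>0 \<le> \<alpha>\<close> by (cases "CS n m c = 0") (auto simp: divide_le_eq)
qed

lemma finite_picking_orders: "finite (picking_orders n m)"
  using finite_lists_length_eq[of "{1..n}" m] unfolding picking_orders_def by (simp add: conj_commute)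

lemma ridge_orders_if_prefix:
  assumes "S \<in> picking_orders n m" "prefix ([1..<Suc n] @ rev [1..<Suc n]) S"
  shows "S \<in> ridge_orders n m"
proof -
  obtain zs where S: "S = [1..<Suc n] @ rev [1..<Suc n] @ zs"
    using assms(2) by (auto simp: prefix_def)
  have "pick S r = r \<and> pick S (n + r) = n - r + 1" if "r \<in> {1..n}" for r
    using that by (auto simp: S pick_def nth_append rev_nth simp del: upt_Suc)
  with assms(1) show ?thesis
    by (simp add: ridge_orders_def)
qed

lemma r_nm_le_r_hat_nm: "r_nm n m \<le> r_hat_nm n m"
  unfolding r_nm_def r_hat_nm_def by (rule INF_superset_mono) (auto simp: ridge_orders_def)

lemma MMS_le:
  assumes "Q \<in> picking_orders n m" "1 \<le> n"
    and "\<And>j. j \<in> {1..n} \<Longrightarrow> (\<Sum>r\<in>alloc_bundle Q j. c r) \<le> B"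
  shows "MMS n m c \<le> B"
proof -
  have "MMS n m c \<le> Max ((\<lambda>j. \<Sum>r\<in>alloc_bundle Q j. c r) ` {1..n})"
    unfolding MMS_def using finite_picking_orders assms(1) by (auto intro: Min_le)
  also have "\<dots> \<le> B"
    using assms(2,3) by (subst Max_le_iff) auto
  finally show ?thesis .
qed

lemma MMS_ge_first:
  assumes c: "c \<in> costs m" and "1 \<le> m" "1 \<le> n"
  shows "c 1 \<le> MMS n m c"
proof -
  have "c 1 \<le> Max ((\<lambda>j. \<Sum>r\<in>alloc_bundle P j. c r) ` {1..n})" if P: "P \<in> picking_orders n m" for P
  proof -
    have "P ! 0 \<in> set P"
      using P \<open>1 \<le> m\<close> by (simp add: picking_orders_def)
    then have j: "P ! 0 \<in> {1..n}"
      using P by (auto simp: picking_orders_def)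
    have "1 \<in> alloc_bundle P (P ! 0)"
      using P \<open>1 \<le> m\<close> by (simp add: alloc_bundle_def pick_def picking_orders_def)
    then have "c 1 \<le> (\<Sum>r\<in>alloc_bundle P (P ! 0). c r)"
      by (intro member_le_sum) (auto simp: alloc_bundle_def costs_nonneg[OF c])
    also have "\<dots> \<le> Max ((\<lambda>j. \<Sum>r\<in>alloc_bundle P j. c r) ` {1..n})"
      using j by (intro Max_ge) auto
    finally show ?thesis .
  qed
  moreover have "replicate m 1 \<in> picking_orders n m"
    using \<open>1 \<le> n\<close> by (auto simp: picking_orders_def)
  ultimately show ?thesis
    unfolding MMS_def using finite_picking_orders by (subst Min_ge_iff) auto
qed

section \<open>Bundle costs from prefix counts\<close>

lemma sum_mult_le_if_prefix_sums_le:
  fixes u v c :: "nat \<Rightarrow> real"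
  assumes antimono: "\<And>r s. 1 \<le> r \<Longrightarrow> r \<le> s \<Longrightarrow> s \<le> m \<Longrightarrow> c s \<le> c r"
    and nonneg: "0 \<le> c m"
    and prefix_sums: "\<And>k. 1 \<le> k \<Longrightarrow> k \<le> m \<Longrightarrow> (\<Sum>r=1..k. u r) \<le> (\<Sum>r=1..k. v r)"
  shows "(\<Sum>r=1..m. u r * c r) \<le> (\<Sum>r=1..m. v r * c r)"
proof (cases "m = 0")
  case False
  define w where "w r = u r - v r" for r
  \<comment> \<open>Abel summation, one term at a time\<close>
  have partial: "(\<Sum>r=1..k. w r * c r) \<le> (\<Sum>r=1..k. w r) * c k" if "1 \<le> k" "k \<le> m" for k
    using that
  proof (induction k rule: nat_induct_at_least)
    case (Suc k)
    have "(\<Sum>r=1..k. w r) \<le> 0"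
      using prefix_sums[of k] Suc.prems Suc.hyps by (simp add: w_def sum_subtractf)
    moreover have "c (Suc k) \<le> c k"
      using antimono Suc.prems Suc.hyps by simp
    ultimately have "(\<Sum>r=1..k. w r) * c k \<le> (\<Sum>r=1..k. w r) * c (Suc k)"
      by (simp add: mult_left_mono_neg)
    with Suc show ?case
      by (simp add: algebra_simps)
  qed simp
  have "(\<Sum>r=1..m. w r * c r) \<le> (\<Sum>r=1..m. w r) * c m"
    using partial False by simp
  also have "\<dots> \<le> 0"
    using prefix_sums[of m] False nonneg by (simp add: w_def sum_subtractf mult_nonpos_nonneg)
  finally show ?thesis
    by (simp add: w_def left_diff_distrib sum_subtractf)
qed simp

lemma sum_alloc_bundle:
  "(\<Sum>r\<in>alloc_bundle S i. c r) = (\<Sum>r=1..length S. of_bool (S ! (r - 1) = i) * (c r :: real))"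
  unfolding alloc_bundle_def pick_def by (simp split del: split_of_bool add: Int_def conj_commute)

lemma sum_of_bool_nth_eq_count_list:
  "k \<le> length S \<Longrightarrow> (\<Sum>r=1..k. of_bool (S ! (r - 1) = i) :: real) = real (count_list (take k S) i)"
proof (induction k)
  case (Suc k)
  then have "take (Suc k) S = take k S @ [S ! k]"
    by (simp add: take_Suc_conv_app_nth)
  with Suc show ?case
    by simp
qed simp

lemma sum_of_bool_eq_mult:
  "finite A \<Longrightarrow> (\<Sum>r\<in>A. of_bool (r = j) * (f r :: real)) = of_bool (j \<in> A) * f j"
  by (simp split del: split_of_bool add: Int_insert_right)

lemma bundle_le_CS_if_counts_bounded:
  fixes \<alpha> a b d :: real
  assumes S: "length S = m" and c: "c \<in> costs m" and "0 < n"
    and "0 \<le> \<alpha>" "0 \<le> a" "0 \<le> b" "0 \<le> d" "a + b + d = 1"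
    and counts: "\<And>k. 1 \<le> k \<Longrightarrow> k \<le> m \<Longrightarrow>
      real (count_list (take k S) i) \<le> \<alpha> * (a * k / n + b + d * (of_bool (n \<le> k) + of_bool (n < k)))"
  shows "(\<Sum>r\<in>alloc_bundle S i. c r) \<le> \<alpha> * CS n m c"
proof -
  define v where "v r = \<alpha> * (a / n + b * of_bool (r = 1) + d * (of_bool (r = n) + of_bool (r = Suc n)))"
    for r :: nat
  have v_sum: "(\<Sum>r\<in>A. v r * f r) =
      \<alpha> * (a / n * (\<Sum>r\<in>A. f r) + b * (of_bool (1 \<in> A) * f 1)
        + d * (of_bool (n \<in> A) * f n + of_bool (Suc n \<in> A) * f (Suc n)))"
    if "finite A" for A and f :: "nat \<Rightarrow> real"
  proof -
    have "v r * f r = \<alpha> * (a / n * f r + b * (of_bool (r = 1) * f r)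
        + d * (of_bool (r = n) * f r + of_bool (r = Suc n) * f r))" for r
      unfolding v_def by (simp add: algebra_simps split del: split_of_bool)
    then show ?thesis
      by (simp only: sum.distrib flip: sum_distrib_left) (simp only: sum_of_bool_eq_mult[OF that])
  qed
  have "(\<Sum>r=1..m. of_bool (S ! (r - 1) = i) * c r) \<le> (\<Sum>r=1..m. v r * c r)"
  proof (rule sum_mult_le_if_prefix_sums_le)
    show "c s \<le> c r" if "1 \<le> r" "r \<le> s" "s \<le> m" for r s
      using costs_antimono[OF c that] .
    show "0 \<le> c m"
      using costs_nonneg[OF c] .
    fix k assume k: "1 \<le> k" "k \<le> m"
    have "(\<Sum>r=1..k. of_bool (S ! (r - 1) = i)) = real (count_list (take k S) i)"
      using sum_of_bool_nth_eq_count_list[of k S i] k S by simp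
    also have "\<dots> \<le> (\<Sum>r=1..k. v r)"
      using counts[OF k] v_sum[of "{1..k}" "\<lambda>_. 1"] k \<open>0 < n\<close> by (simp add: algebra_simps Suc_le_eq)
    finally show "(\<Sum>r=1..k. of_bool (S ! (r - 1) = i)) \<le> (\<Sum>r=1..k. v r)" .
  qed
  also have "\<dots> = \<alpha> * (a * ((\<Sum>r=1..m. c r) / n) + b * c 1 + d * (c n + c (Suc n)))"
    using v_sum[of "{1..m}" c] costs_outside[OF c] by (auto simp: algebra_simps)
  also have "\<dots> \<le> \<alpha> * (a * CS n m c + b * CS n m c + d * CS n m c)"
    using assms(4-7) by (intro mult_left_mono add_mono) (auto simp: CS_def)
  also have "\<dots> = \<alpha> * CS n m c"
    using \<open>a + b + d = 1\<close> by (simp flip: distrib_right)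
  finally show ?thesis
    using S by (simp add: sum_alloc_bundle)
qed

section \<open>Picking orders within quotas\<close>

definition within_quotas :: "nat \<Rightarrow> (nat \<Rightarrow> nat \<Rightarrow> nat) \<Rightarrow> nat list \<Rightarrow> bool" where
  "within_quotas n q S \<longleftrightarrow>
     set S \<subseteq> {1..n} \<and> (\<forall>i\<in>{1..n}. \<forall>k\<le>length S. count_list (take k S) i \<le> q i k)"

lemma within_quotas_picking_order: "within_quotas n q S \<Longrightarrow> S \<in> picking_orders n (length S)"
  by (simp add: within_quotas_def picking_orders_def)

lemma within_quotas_take: "within_quotas n q S \<Longrightarrow> within_quotas n q (take m S)"
  unfolding within_quotas_def by (auto dest: in_set_takeD)

lemma within_quotas_snoc:
  assumes S: "within_quotas n q S"
    and mono: "\<And>i. q i (length S) \<le> q i (Suc (length S))"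
    and room: "Suc (length S) \<le> (\<Sum>i=1..n. q i (Suc (length S)))"
  obtains i where "within_quotas n q (S @ [i])"
proof -
  have "\<exists>i\<in>{1..n}. count_list S i < q i (Suc (length S))"
  proof (rule ccontr)
    assume "\<not> ?thesis"
    then have "(\<Sum>i=1..n. q i (Suc (length S))) \<le> (\<Sum>i=1..n. count_list S i)"
      by (intro sum_mono) (simp add: not_less)
    also have "\<dots> = length S"
      using S by (simp add: within_quotas_def sum_count_set)
    finally show False
      using room by simp
  qed
  then obtain i where i: "i \<in> {1..n}" "count_list S i < q i (Suc (length S))" ..
  have "count_list (take k (S @ [i])) j \<le> q j k" if "j \<in> {1..n}" "k \<le> Suc (length S)" for j k
  proof (cases "k \<le> length S")
    case True
    then show ?thesis
      using S that(1) by (simp add: within_quotas_def)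
  next
    case False
    with that(2) have "k = Suc (length S)"
      by simp
    moreover have "count_list S j \<le> q j (length S)"
      using S that(1) unfolding within_quotas_def by (metis order_refl take_all)
    ultimately show ?thesis
      using i(2) mono[of j] by auto
  qed
  with S i(1) have "within_quotas n q (S @ [i])"
    by (simp add: within_quotas_def)
  then show ?thesis ..
qed

lemma within_quotas_extend:
  assumes "within_quotas n q S" "length S \<le> m"
    and mono: "\<And>i k. q i k \<le> q i (Suc k)"
    and room: "\<And>k. length S < k \<Longrightarrow> k \<le> (\<Sum>i=1..n. q i k)"
  obtains T where "within_quotas n q T" "length T = m" "prefix S T"
  using \<open>length S \<le> m\<close>
proof (induction m arbitrary: thesis rule: dec_induct)
  case base
  show ?case
    using base[OF assms(1)] by simp
next
  case (step m)
  then obtain T where T: "within_quotas n q T" "length T = m" "prefix S T"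
    by blast
  moreover obtain i where "within_quotas n q (T @ [i])"
    using within_quotas_snoc[OF T(1) mono room] T(2) step(1) by auto
  ultimately show ?case
    using step(4)[of "T @ [i]"] by (simp add: prefix_snoc)
qed

(* quota i k is the integer part of 13/9 (a k/4 + b + d g k) for the weights (a, b, d) of agent i
   in quota_convex_bound. *)
definition quota :: "nat \<Rightarrow> nat \<Rightarrow> nat" where
  "quota i k =
    (if i = 1 then (4 * k + 23) div 27
     else if i = 2 then (6 * k + 15) div 27
     else if i = 3 then 13 * k div 36
     else (8 * k + 7 * (of_bool (4 \<le> k) + of_bool (4 < k))) div 27)"

lemma quota_mono: "quota i k \<le> quota i (Suc k)"
  by (auto simp: quota_def intro!: div_le_mono)

lemma sum_quota_ge: "k \<le> (\<Sum>i=1..4. quota i k)"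
proof -
  have sum: "(\<Sum>i=1..4. quota i k) = quota 1 k + quota 2 k + quota 3 k + quota 4 k"
    by (simp add: numeral_eq_Suc)
  show ?thesis
  \<comment> \<open>Rounding down costs less than 1 per quota, so the sum exceeds (111 k - 209) / 108 > k - 1
    once k \<ge> 34; smaller k are evaluated.\<close>
  proof (cases "k < 34")
    case True
    have "\<forall>k\<in>set [0..<34]. k \<le> quota 1 k + quota 2 k + quota 3 k + quota 4 k"
      by code_simp
    with True show ?thesis
      unfolding sum by simp
  next
    case False
    have "4 * k + 23 < 27 * ((4 * k + 23) div 27) + 27" "6 * k + 15 < 27 * ((6 * k + 15) div 27) + 27"
      "13 * k < 36 * (13 * k div 36) + 36" "8 * k + 14 < 27 * ((8 * k + 14) div 27) + 27"
      by linarith+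
    with False show ?thesis
      unfolding sum by (simp add: quota_def)
  qed
qed

lemma quota_convex_bound:
  assumes "i \<in> {1..4}"
  obtains a b d :: real where "0 \<le> a" "0 \<le> b" "0 \<le> d" "a + b + d = 1"
    "\<And>k. real (quota i k) \<le> 13/9 * (a * k / 4 + b + d * (of_bool (4 \<le> k) + of_bool (4 < k)))"
proof -
  have div_le: "real (x div y) \<le> real x / real y" for x y :: nat
    by (rule of_nat_div_le_of_nat)
  consider "i = 1" | "i = 2" | "i = 3" | "i = 4"
    using assms by fastforce
  then show ?thesis
  proof cases
    case 1
    have "real (quota i k) \<le> 13/9 * (16/39 * k / 4 + 23/39)" for k
      using div_le[of "4 * k + 23" 27] 1 by (simp add: quota_def)
    then show ?thesis
      by (intro that[of "16/39" "23/39" 0]) auto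
  next
    case 2
    have "real (quota i k) \<le> 13/9 * (24/39 * k / 4 + 15/39)" for k
      using div_le[of "6 * k + 15" 27] 2 by (simp add: quota_def)
    then show ?thesis
      by (intro that[of "24/39" "15/39" 0]) auto
  next
    case 3
    have "real (quota i k) \<le> 13/9 * (k / 4)" for k
      using div_le[of "13 * k" 36] 3 by (simp add: quota_def)
    then show ?thesis
      by (intro that[of 1 0 0]) auto
  next
    case 4
    have "real (quota i k) \<le> 13/9 * (32/39 * k / 4 + 7/39 * (of_bool (4 \<le> k) + of_bool (4 < k)))"
      for k
      using div_le[of "8 * k + 7 * (of_bool (4 \<le> k) + of_bool (4 < k))" 27] 4
      by (simp add: quota_def field_simps split del: split_of_bool)
    then show ?thesis
      by (intro that[of "32/39" 0 "7/39"]) auto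
  qed
qed

(* code_simp cannot enumerate {1..n} or (ALL k <= n. _); list ranges are used instead, here and in
   the certificate checks below. *)
lemma ridge_prefix_within_quotas: "within_quotas 4 quota ([1..<Suc 4] @ rev [1..<Suc 4])"
proof -
  have all_le: "(\<forall>k\<le>n. P k) \<longleftrightarrow> (\<forall>k\<in>set [0..<Suc n]. P k)" for n and P :: "nat \<Rightarrow> bool"
    by auto
  show ?thesis
    unfolding within_quotas_def atLeastAtMost_upt all_le by code_simp
qed

lemma bundle_le_CS_if_within_quotas:
  assumes S: "within_quotas 4 quota S" and i: "i \<in> {1..4}" and c: "c \<in> costs (length S)"
  shows "(\<Sum>r\<in>alloc_bundle S i. c r) \<le> 13/9 * CS 4 (length S) c"
proof -
  obtain a b d :: real where abd: "0 \<le> a" "0 \<le> b" "0 \<le> d" "a + b + d = 1"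
    and quota: "\<And>k. real (quota i k) \<le> 13/9 * (a * k / 4 + b + d * (of_bool (4 \<le> k) + of_bool (4 < k)))"
    using quota_convex_bound[OF i] by blast
  show ?thesis
  proof (rule bundle_le_CS_if_counts_bounded[OF refl c _ _ abd])
    fix k assume "1 \<le> k" "k \<le> length S"
    then have "count_list (take k S) i \<le> quota i k"
      using S i by (simp add: within_quotas_def)
    then show "real (count_list (take k S) i)
        \<le> 13/9 * (a * k / real 4 + b + d * (of_bool (4 \<le> k) + of_bool (4 < k)))"
      using quota[of k] by simp
  qed simp_all
qed

lemma r_S_le_if_within_quotas:
  assumes "within_quotas 4 quota S"
  shows "r_S 4 (length S) S \<le> ereal (13/9)"
proof (rule r_S_le)
  fix i :: nat and c assume "i \<in> {1..4}" "c \<in> costs (length S)"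
  with assms show "(\<Sum>r\<in>alloc_bundle S i. c r) \<le> 13/9 * CS 4 (length S) c"
    by (rule bundle_le_CS_if_within_quotas)
qed simp

lemma quota_picking_order_exists:
  obtains S where "within_quotas 4 quota S" "length S = m" "8 \<le> m \<Longrightarrow> S \<in> ridge_orders 4 m"
proof -
  let ?R = "[1..<Suc 4] @ rev [1..<Suc 4]"
  have "length ?R \<le> max 8 m"
    by simp
  then obtain T where T: "within_quotas 4 quota T" "length T = max 8 m" "prefix ?R T"
    by (rule within_quotas_extend[OF ridge_prefix_within_quotas _ quota_mono sum_quota_ge])
  have S: "within_quotas 4 quota (take m T)" "length (take m T) = m"
    using within_quotas_take[OF T(1)] T(2) by auto
  moreover have "take m T \<in> ridge_orders 4 m" if "8 \<le> m"
  proof (rule ridge_orders_if_prefix)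
    show "take m T \<in> picking_orders 4 m"
      using within_quotas_picking_order[OF S(1)] S(2) by simp
    show "prefix ?R (take m T)"
      using T(3) \<open>8 \<le> m\<close> by (auto simp: prefix_def)
  qed
  ultimately show ?thesis
    using that by blast
qed

lemma r_nm_4_le: "r_nm 4 m \<le> ereal (13/9)"
proof -
  obtain S where S: "within_quotas 4 quota S" "length S = m"
    using quota_picking_order_exists by blast
  have "r_nm 4 m \<le> r_S 4 m S"
    unfolding r_nm_def using within_quotas_picking_order[OF S(1)] S(2) by (auto intro: INF_lower)
  also have "\<dots> \<le> ereal (13/9)"
    using r_S_le_if_within_quotas[OF S(1)] S(2) by simp
  finally show ?thesis .
qed

lemma r_hat_nm_4_le: "8 \<le> m \<Longrightarrow> r_hat_nm 4 m \<le> ereal (13/9)"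
proof -
  assume "8 \<le> m"
  then obtain S where S: "within_quotas 4 quota S" "length S = m" "S \<in> ridge_orders 4 m"
    using quota_picking_order_exists by metis
  have "r_hat_nm 4 m \<le> r_S 4 m S"
    unfolding r_hat_nm_def using S(3) by (rule INF_lower)
  also have "\<dots> \<le> ereal (13/9)"
    using r_S_le_if_within_quotas[OF S(1)] S(2) by simp
  finally show ?thesis .
qed

section \<open>Lower bounds from adversary trees\<close>

definition entry :: "nat list \<Rightarrow> nat \<Rightarrow> nat" where
  "entry cl r = (if 1 \<le> r \<and> r \<le> length cl then cl ! (r - 1) else 0)"

definition list_bundle_cost :: "nat list \<Rightarrow> nat \<Rightarrow> nat list \<Rightarrow> nat" where
  "list_bundle_cost p i cl = sum_list (map (\<lambda>(x, c). if x = i then c else 0) (zip p cl))"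

lemma entry_costs: "sorted_wrt (\<ge>) cl \<Longrightarrow> length cl \<le> m \<Longrightarrow> (\<lambda>r. real (entry cl r)) \<in> costs m"
  by (auto simp: costs_def entry_def sorted_wrt_iff_nth_less le_less diff_less_mono)

lemma sum_entry: "length cl \<le> m \<Longrightarrow> (\<Sum>r=1..m. entry cl r) = sum_list cl"
proof -
  assume "length cl \<le> m"
  have "(\<Sum>r=1..m. entry cl r) = (\<Sum>k<m. entry cl (Suc k))"
    by (simp only: One_nat_def sum.atLeast1_atMost_eq)
  also have "\<dots> = (\<Sum>k<length cl. entry cl (Suc k))"
    using \<open>length cl \<le> m\<close> by (intro sum.mono_neutral_right) (auto simp: entry_def)
  also have "\<dots> = sum_list cl"
    by (simp add: entry_def sum_list_sum_nth atLeast0LessThan)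
  finally show ?thesis .
qed

lemma sum_alloc_bundle_entry:
  assumes "length cl \<le> length S"
  shows "(\<Sum>r\<in>alloc_bundle S i. real (entry cl r)) = real (list_bundle_cost S i cl)"
proof -
  have "(\<Sum>r\<in>alloc_bundle S i. real (entry cl r))
      = (\<Sum>k<length S. of_bool (S ! k = i) * real (entry cl (Suc k)))"
    unfolding sum_alloc_bundle by (simp only: One_nat_def sum.atLeast1_atMost_eq diff_Suc_Suc diff_zero)
  also have "\<dots> = (\<Sum>k<length cl. of_bool (S ! k = i) * real (entry cl (Suc k)))"
    using assms by (intro sum.mono_neutral_right) (auto simp: entry_def)
  also have "\<dots> = (\<Sum>k<length cl. real (if S ! k = i then cl ! k else 0))"
    by (rule sum.cong) (auto simp: entry_def)
  also have "\<dots> = real (list_bundle_cost S i cl)"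
    using assms by (simp add: list_bundle_cost_def sum_list_sum_nth atLeast0LessThan)
  finally show ?thesis .
qed

lemma list_bundle_cost_prefix:
  "prefix p S \<Longrightarrow> length cl \<le> length p \<Longrightarrow> list_bundle_cost p i cl = list_bundle_cost S i cl"
  by (auto simp: prefix_def list_bundle_cost_def zip_append1)

lemma CS_entry:
  assumes "0 < n" "length cl \<le> m"
  shows "real n * CS n m (\<lambda>r. real (entry cl r))
    = real (max (sum_list cl) (n * max (entry cl 1) (entry cl n + entry cl (Suc n))))"
proof -
  have "(\<Sum>r=1..m. real (entry cl r)) = real (sum_list cl)"
    using sum_entry[OF assms(2)] by (metis of_nat_sum)
  then show ?thesis
    using assms(1) by (simp add: CS_def max_mult_distrib_left of_nat_max)
qed

(* The left-hand side is a times n CS of the cost vector cl, see CS_entry. *)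
definition CS_witness :: "nat \<Rightarrow> nat \<Rightarrow> nat \<Rightarrow> nat list \<Rightarrow> nat list \<Rightarrow> bool" where
  "CS_witness a b n p cl \<longleftrightarrow>
     p \<noteq> [] \<and> length cl \<le> length p \<and> sorted_wrt (\<ge>) cl \<and> 0 < entry cl 1 \<and>
     a * max (sum_list cl) (n * max (entry cl 1) (entry cl n + entry cl (Suc n)))
       \<le> b * n * list_bundle_cost p (last p) cl"

fun MMS_bound :: "nat \<Rightarrow> nat \<Rightarrow> nat list \<times> nat list \<times> nat \<Rightarrow> bool" where
  "MMS_bound n m (cl, Q, B) \<longleftrightarrow>
     sorted_wrt (\<ge>) cl \<and> 0 < entry cl 1 \<and> length cl \<le> m \<and> length Q = m \<and>
     set Q \<subseteq> set [1..<Suc n] \<and> (\<forall>j\<in>set [1..<Suc n]. list_bundle_cost Q j cl \<le> B)"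

fun MMS_witness :: "nat \<Rightarrow> nat \<Rightarrow> nat list \<Rightarrow> nat list \<times> nat list \<times> nat \<Rightarrow> bool" where
  "MMS_witness a b p (cl, Q, B) \<longleftrightarrow>
     p \<noteq> [] \<and> length cl \<le> length p \<and> a * B \<le> b * list_bundle_cost p (last p) cl"

lemma last_prefix_in_agents:
  assumes "prefix p S" "p \<noteq> []" "S \<in> picking_orders n m"
  shows "last p \<in> {1..n}"
proof -
  have "last p \<in> set S"
    using last_in_set[OF assms(2)] set_mono_prefix[OF assms(1)] by blast
  then show ?thesis
    using assms(3) by (auto simp: picking_orders_def)
qed

lemma r_S_ge_if_CS_witness:
  assumes S: "S \<in> picking_orders n m" and "prefix p S" "CS_witness a b n p cl" "0 < n" "0 < b"
  shows "ereal (a / b) \<le> r_S n m S"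
proof -
  let ?c = "\<lambda>r. real (entry cl r)" and ?X = "real (list_bundle_cost p (last p) cl)"
  have p: "p \<noteq> []" "length cl \<le> length p" "sorted_wrt (\<ge>) cl" "0 < entry cl 1"
    and ratio: "a * max (sum_list cl) (n * max (entry cl 1) (entry cl n + entry cl (Suc n)))
      \<le> b * n * list_bundle_cost p (last p) cl"
    using assms(3) by (auto simp: CS_witness_def)
  have len: "length cl \<le> m"
    using prefix_length_le[OF \<open>prefix p S\<close>] S p(2) by (simp add: picking_orders_def)
  have cost: "(\<Sum>r\<in>alloc_bundle S (last p). ?c r) = ?X"
    using sum_alloc_bundle_entry list_bundle_cost_prefix[OF \<open>prefix p S\<close> p(2)]
      prefix_length_le[OF \<open>prefix p S\<close>] p(2) by simp
  have "real a * (real n * CS n m ?c) \<le> real b * real n * ?X"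
    using ratio unfolding CS_entry[OF \<open>0 < n\<close> len] by (metis of_nat_le_iff of_nat_mult)
  then have "real a * CS n m ?c \<le> real b * ?X"
    using \<open>0 < n\<close> by (simp add: algebra_simps)
  moreover have "0 < CS n m ?c"
    using CS_ge_first[of ?c n m] p(4) by simp
  ultimately have "a / b \<le> ?X / CS n m ?c"
    using \<open>0 < b\<close> by (simp add: field_simps)
  also have "ereal (?X / CS n m ?c) \<le> r_S n m S"
    using r_S_ge[OF last_prefix_in_agents[OF \<open>prefix p S\<close> p(1) S] entry_costs[OF p(3) len], of S] cost
    by simp
  finally show ?thesis
    by simp
qed

lemma MMS_entry_le:
  assumes "MMS_bound n m (cl, Q, B)" "0 < n"
  shows "MMS n m (\<lambda>r. real (entry cl r)) \<le> B"
proof (rule MMS_le)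
  note bound = assms(1)[unfolded MMS_bound.simps atLeastAtMost_upt[symmetric]]
  show "Q \<in> picking_orders n m"
    using bound by (simp add: picking_orders_def)
  fix j assume "j \<in> {1..n}"
  then show "(\<Sum>r\<in>alloc_bundle Q j. real (entry cl r)) \<le> real B"
    using bound by (simp add: sum_alloc_bundle_entry)
qed (use assms in simp)

lemma rho_S_ge_if_MMS_witness:
  assumes S: "S \<in> picking_orders n m" and "prefix p S" "MMS_bound n m cert" "MMS_witness a b p cert"
    and "0 < n" "0 < b"
  shows "ereal (a / b) \<le> rho_S n m S"
proof -
  obtain cl Q B where cert: "cert = (cl, Q, B)"
    by (cases cert)
  let ?c = "\<lambda>r. real (entry cl r)" and ?X = "real (list_bundle_cost p (last p) cl)"
  have p: "p \<noteq> []" "length cl \<le> length p" and ratio: "a * B \<le> b * list_bundle_cost p (last p) cl"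
    using assms(4) by (auto simp: cert)
  have cl: "sorted_wrt (\<ge>) cl" "0 < entry cl 1" "length cl \<le> m"
    using assms(3) by (auto simp: cert)
  have "1 \<le> m"
    using prefix_length_le[OF \<open>prefix p S\<close>] S p(1) by (cases p) (auto simp: picking_orders_def)
  have cost: "(\<Sum>r\<in>alloc_bundle S (last p). ?c r) = ?X"
    using sum_alloc_bundle_entry list_bundle_cost_prefix[OF \<open>prefix p S\<close> p(2)]
      prefix_length_le[OF \<open>prefix p S\<close>] p(2) by simp
  have "real a * MMS n m ?c \<le> real b * ?X"
  proof -
    have "real a * MMS n m ?c \<le> real a * real B"
      using MMS_entry_le[OF assms(3)[unfolded cert] \<open>0 < n\<close>] by (simp add: mult_left_mono)
    also have "\<dots> \<le> real b * ?X"
      using ratio by (metis of_nat_le_iff of_nat_mult)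
    finally show ?thesis .
  qed
  moreover have "0 < MMS n m ?c"
    using MMS_ge_first[OF entry_costs[OF cl(1,3)] \<open>1 \<le> m\<close>, of n] \<open>0 < n\<close> cl(2) by simp
  ultimately have "a / b \<le> ?X / MMS n m ?c"
    using \<open>0 < b\<close> by (simp add: field_simps)
  also have "ereal (?X / MMS n m ?c) \<le> rho_S n m S"
    using rho_S_ge[OF last_prefix_in_agents[OF \<open>prefix p S\<close> p(1) S] entry_costs[OF cl(1,3)], of S] cost
    by simp
  finally show ?thesis
    by simp
qed

datatype tree = Leaf nat | Node "tree list"

fun covers :: "nat \<Rightarrow> (nat list \<Rightarrow> 'c \<Rightarrow> bool) \<Rightarrow> 'c list \<Rightarrow> nat \<Rightarrow> tree \<Rightarrow> nat list \<Rightarrow> bool" where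
  "covers n w cs d (Leaf j) p \<longleftrightarrow> j < length cs \<and> w p (cs ! j)"
| "covers n w cs 0 (Node ts) p \<longleftrightarrow> False"
| "covers n w cs (Suc d) (Node ts) p \<longleftrightarrow>
     length ts = n \<and> (\<forall>i\<in>set [1..<Suc n]. covers n w cs d (ts ! (i - 1)) (p @ [i]))"

lemma covers_sound:
  assumes "covers n w cs d t p" "prefix p S" "length p + d \<le> length S" "set S \<subseteq> {1..n}"
  shows "\<exists>q c. prefix q S \<and> c \<in> set cs \<and> w q c"
  using assms
proof (induction n w cs d t p rule: covers.induct)
  case (1 n w cs d j p)
  then show ?case
    by (auto intro: nth_mem)
next
  case (3 n w cs d ts p)
  from "3.prems"(2) obtain zs where "S = p @ zs"
    by (auto simp: prefix_def)
  with "3.prems"(3) obtain i zs' where S: "S = p @ i # zs'"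
    by (cases zs) auto
  then have i: "i \<in> set [1..<Suc n]"
    using "3.prems"(4) by auto
  then have "covers n w cs d (ts ! (i - 1)) (p @ [i])"
    using "3.prems"(1) unfolding covers.simps(3) by blast
  moreover have "prefix (p @ [i]) S"
    using S by simp
  ultimately show ?case
    using "3.IH"[OF i] "3.prems"(3,4) by simp
qed simp

lemma r_nm_ge_if_covers:
  assumes "covers n (CS_witness a b n) cs m t []" "0 < n" "0 < b"
  shows "ereal (a / b) \<le> r_nm n m"
  unfolding r_nm_def
proof (rule INF_greatest)
  fix S assume S: "S \<in> picking_orders n m"
  have "\<exists>p cl. prefix p S \<and> cl \<in> set cs \<and> CS_witness a b n p cl"
    using covers_sound[OF assms(1)] S by (simp add: picking_orders_def)
  then obtain p cl where "prefix p S" "CS_witness a b n p cl"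
    by blast
  then show "ereal (a / b) \<le> r_S n m S"
    by (rule r_S_ge_if_CS_witness[OF S _ _ assms(2,3)])
qed

lemma rho_nm_ge_if_covers:
  assumes "list_all (MMS_bound n m) cs" "covers n (MMS_witness a b) cs m t []" "0 < n" "0 < b"
  shows "ereal (a / b) \<le> rho_nm n m"
  unfolding rho_nm_def
proof (rule INF_greatest)
  fix S assume S: "S \<in> picking_orders n m"
  have "\<exists>p cert. prefix p S \<and> cert \<in> set cs \<and> MMS_witness a b p cert"
    using covers_sound[OF assms(2)] S by (simp add: picking_orders_def)
  then obtain p cert where "prefix p S" "cert \<in> set cs" "MMS_witness a b p cert"
    by blast
  moreover have "MMS_bound n m cert"
    using assms(1) \<open>cert \<in> set cs\<close> by (simp add: list_all_iff)
  ultimately show "ereal (a / b) \<le> rho_S n m S"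
    using rho_S_ge_if_MMS_witness S assms(3,4) by blast
qed

definition CS_costs :: "nat list list" where
  "CS_costs =
  [[1, 1],
   [1, 1, 1],
   [1, 1, 1, 1],
   [2, 1, 1, 1, 1],
   [2, 2, 1, 1, 1],
   [2, 2, 2, 1, 1],
   [2, 1, 1, 1, 1, 1],
   [2, 2, 1, 1, 1, 1],
   [2, 1, 1, 1, 1, 1, 1],
   [8, 3, 3, 3, 3, 3, 3, 3, 3],
   [7, 7, 2, 2, 2, 2, 2, 2, 2],
   [3, 1, 1, 1, 1, 1, 1, 1, 1, 1],
   [4, 4, 1, 1, 1, 1, 1, 1, 1, 1],
   [2, 2, 2, 2, 2, 2, 2, 2, 2, 2],
   [10, 3, 3, 3, 3, 3, 3, 3, 3, 3, 3],
   [9, 9, 2, 2, 2, 2, 2, 2, 2, 2, 2],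
   [4, 4, 4, 4, 4, 4, 4, 4, 4, 4, 4],
   [3, 3, 1, 1, 1, 1, 1, 1],
   [1, 1, 1, 1, 1, 1, 1, 1]]"

definition CS_tree :: tree where
  "CS_tree =
  Node [Node [Leaf 0, Node [Leaf 1, Leaf 1, Node [Leaf 2, Leaf 2, Leaf 2, Node [Leaf 3, Leaf 4,
   Leaf 5, Node [Leaf 6, Leaf 7, Node [Leaf 8, Node [Node [Leaf 9, Leaf 10, Node [Leaf 11,
   Leaf 12, Leaf 13, Node [Leaf 14, Leaf 15, Leaf 16, Leaf 16]], Node [Leaf 11, Leaf 12,
   Node [Leaf 14, Leaf 15, Leaf 16, Leaf 16], Leaf 13]], Leaf 17, Leaf 18, Leaf 18], Leaf 8,
   Leaf 8], Leaf 6]]], Node [Leaf 2, Leaf 2, Node [Leaf 3, Leaf 4, Node [Leaf 6, Leaf 7, Leaf 6,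
   Node [Leaf 8, Node [Node [Leaf 9, Leaf 10, Node [Leaf 11, Leaf 12, Leaf 13, Node [Leaf 14,
   Leaf 15, Leaf 16, Leaf 16]], Node [Leaf 11, Leaf 12, Node [Leaf 14, Leaf 15, Leaf 16,
   Leaf 16], Leaf 13]], Leaf 17, Leaf 18, Leaf 18], Leaf 8, Leaf 8]], Leaf 5], Leaf 2]],
   Node [Leaf 1, Node [Leaf 2, Leaf 2, Leaf 2, Node [Leaf 3, Leaf 5, Leaf 4, Node [Leaf 6,
   Node [Leaf 8, Leaf 8, Node [Node [Leaf 9, Node [Leaf 11, Leaf 13, Leaf 12, Node [Leaf 14,
   Leaf 16, Leaf 15, Leaf 16]], Leaf 10, Node [Leaf 11, Node [Leaf 14, Leaf 16, Leaf 15,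
   Leaf 16], Leaf 12, Leaf 13]], Leaf 18, Leaf 17, Leaf 18], Leaf 8], Leaf 7, Leaf 6]]], Leaf 1,
   Node [Leaf 2, Node [Leaf 3, Node [Leaf 6, Leaf 6, Leaf 7, Node [Leaf 8, Leaf 8,
   Node [Node [Leaf 9, Node [Leaf 11, Leaf 13, Leaf 12, Node [Leaf 14, Leaf 16, Leaf 15,
   Leaf 16]], Leaf 10, Node [Leaf 11, Node [Leaf 14, Leaf 16, Leaf 15, Leaf 16], Leaf 12,
   Leaf 13]], Leaf 18, Leaf 17, Leaf 18], Leaf 8]], Leaf 4, Leaf 5], Leaf 2, Leaf 2]],
   Node [Leaf 1, Node [Leaf 2, Leaf 2, Node [Leaf 3, Leaf 5, Node [Leaf 6, Node [Leaf 8, Leaf 8,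
   Leaf 8, Node [Node [Leaf 9, Node [Leaf 11, Leaf 13, Node [Leaf 14, Leaf 16, Leaf 16,
   Leaf 15], Leaf 12], Node [Leaf 11, Node [Leaf 14, Leaf 16, Leaf 16, Leaf 15], Leaf 13,
   Leaf 12], Leaf 10], Leaf 18, Leaf 18, Leaf 17]], Leaf 6, Leaf 7], Leaf 4], Leaf 2],
   Node [Leaf 2, Node [Leaf 3, Node [Leaf 6, Leaf 6, Node [Leaf 8, Leaf 8, Leaf 8,
   Node [Node [Leaf 9, Node [Leaf 11, Leaf 13, Node [Leaf 14, Leaf 16, Leaf 16, Leaf 15],
   Leaf 12], Node [Leaf 11, Node [Leaf 14, Leaf 16, Leaf 16, Leaf 15], Leaf 13, Leaf 12],
   Leaf 10], Leaf 18, Leaf 18, Leaf 17]], Leaf 7], Leaf 5, Leaf 4], Leaf 2, Leaf 2], Leaf 1]],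
   Node [Node [Leaf 1, Leaf 1, Node [Leaf 2, Leaf 2, Leaf 2, Node [Leaf 4, Leaf 3, Leaf 5,
   Node [Leaf 7, Leaf 6, Node [Node [Leaf 17, Node [Leaf 10, Leaf 9, Node [Leaf 12, Leaf 11,
   Leaf 13, Node [Leaf 15, Leaf 14, Leaf 16, Leaf 16]], Node [Leaf 12, Leaf 11, Node [Leaf 15,
   Leaf 14, Leaf 16, Leaf 16], Leaf 13]], Leaf 18, Leaf 18], Leaf 8, Leaf 8, Leaf 8], Leaf 6]]],
   Node [Leaf 2, Leaf 2, Node [Leaf 4, Leaf 3, Node [Leaf 7, Leaf 6, Leaf 6,
   Node [Node [Leaf 17, Node [Leaf 10, Leaf 9, Node [Leaf 12, Leaf 11, Leaf 13, Node [Leaf 15,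
   Leaf 14, Leaf 16, Leaf 16]], Node [Leaf 12, Leaf 11, Node [Leaf 15, Leaf 14, Leaf 16,
   Leaf 16], Leaf 13]], Leaf 18, Leaf 18], Leaf 8, Leaf 8, Leaf 8]], Leaf 5], Leaf 2]], Leaf 0,
   Node [Node [Leaf 2, Leaf 2, Leaf 2, Node [Leaf 5, Leaf 3, Leaf 4, Node [Node [Leaf 8, Leaf 8,
   Node [Leaf 18, Node [Node [Leaf 13, Leaf 11, Leaf 12, Node [Leaf 16, Leaf 14, Leaf 15,
   Leaf 16]], Leaf 9, Leaf 10, Node [Node [Leaf 16, Leaf 14, Leaf 15, Leaf 16], Leaf 11,
   Leaf 12, Leaf 13]], Leaf 17, Leaf 18], Leaf 8], Leaf 6, Leaf 7, Leaf 6]]], Leaf 1, Leaf 1,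
   Node [Node [Node [Leaf 6, Leaf 6, Leaf 7, Node [Leaf 8, Leaf 8, Node [Leaf 18,
   Node [Node [Leaf 13, Leaf 11, Leaf 12, Node [Leaf 16, Leaf 14, Leaf 15, Leaf 16]], Leaf 9,
   Leaf 10, Node [Node [Leaf 16, Leaf 14, Leaf 15, Leaf 16], Leaf 11, Leaf 12, Leaf 13]],
   Leaf 17, Leaf 18], Leaf 8]], Leaf 3, Leaf 4, Leaf 5], Leaf 2, Leaf 2, Leaf 2]],
   Node [Node [Leaf 2, Leaf 2, Node [Leaf 5, Leaf 3, Node [Node [Leaf 8, Leaf 8, Leaf 8,
   Node [Leaf 18, Node [Node [Leaf 13, Leaf 11, Node [Leaf 16, Leaf 14, Leaf 16, Leaf 15],
   Leaf 12], Leaf 9, Node [Node [Leaf 16, Leaf 14, Leaf 16, Leaf 15], Leaf 11, Leaf 13,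
   Leaf 12], Leaf 10], Leaf 18, Leaf 17]], Leaf 6, Leaf 6, Leaf 7], Leaf 4], Leaf 2], Leaf 1,
   Node [Node [Node [Leaf 6, Leaf 6, Node [Leaf 8, Leaf 8, Leaf 8, Node [Leaf 18,
   Node [Node [Leaf 13, Leaf 11, Node [Leaf 16, Leaf 14, Leaf 16, Leaf 15], Leaf 12], Leaf 9,
   Node [Node [Leaf 16, Leaf 14, Leaf 16, Leaf 15], Leaf 11, Leaf 13, Leaf 12], Leaf 10],
   Leaf 18, Leaf 17]], Leaf 7], Leaf 3, Leaf 5, Leaf 4], Leaf 2, Leaf 2, Leaf 2], Leaf 1]],
   Node [Node [Leaf 1, Node [Leaf 2, Leaf 2, Leaf 2, Node [Leaf 4, Leaf 5, Leaf 3, Node [Leaf 7,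
   Node [Node [Leaf 17, Leaf 18, Node [Leaf 10, Node [Leaf 12, Leaf 13, Leaf 11, Node [Leaf 15,
   Leaf 16, Leaf 14, Leaf 16]], Leaf 9, Node [Leaf 12, Node [Leaf 15, Leaf 16, Leaf 14,
   Leaf 16], Leaf 11, Leaf 13]], Leaf 18], Leaf 8, Leaf 8, Leaf 8], Leaf 6, Leaf 6]]], Leaf 1,
   Node [Leaf 2, Node [Leaf 4, Node [Leaf 7, Leaf 6, Leaf 6, Node [Node [Leaf 17, Leaf 18,
   Node [Leaf 10, Node [Leaf 12, Leaf 13, Leaf 11, Node [Leaf 15, Leaf 16, Leaf 14, Leaf 16]],
   Leaf 9, Node [Leaf 12, Node [Leaf 15, Leaf 16, Leaf 14, Leaf 16], Leaf 11, Leaf 13]],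
   Leaf 18], Leaf 8, Leaf 8, Leaf 8]], Leaf 3, Leaf 5], Leaf 2, Leaf 2]], Node [Node [Leaf 2,
   Leaf 2, Leaf 2, Node [Leaf 5, Leaf 4, Leaf 3, Node [Node [Leaf 8, Node [Leaf 18, Leaf 17,
   Node [Node [Leaf 13, Leaf 12, Leaf 11, Node [Leaf 16, Leaf 15, Leaf 14, Leaf 16]], Leaf 10,
   Leaf 9, Node [Node [Leaf 16, Leaf 15, Leaf 14, Leaf 16], Leaf 12, Leaf 11, Leaf 13]],
   Leaf 18], Leaf 8, Leaf 8], Leaf 7, Leaf 6, Leaf 6]]], Leaf 1, Leaf 1,
   Node [Node [Node [Leaf 6, Leaf 7, Leaf 6, Node [Leaf 8, Node [Leaf 18, Leaf 17,
   Node [Node [Leaf 13, Leaf 12, Leaf 11, Node [Leaf 16, Leaf 15, Leaf 14, Leaf 16]], Leaf 10,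
   Leaf 9, Node [Node [Leaf 16, Leaf 15, Leaf 14, Leaf 16], Leaf 12, Leaf 11, Leaf 13]],
   Leaf 18], Leaf 8, Leaf 8]], Leaf 4, Leaf 3, Leaf 5], Leaf 2, Leaf 2, Leaf 2]], Leaf 0,
   Node [Node [Leaf 2, Node [Leaf 5, Node [Node [Leaf 8, Leaf 8, Leaf 8, Node [Leaf 18, Leaf 18,
   Node [Node [Leaf 13, Node [Leaf 16, Leaf 16, Leaf 14, Leaf 15], Leaf 11, Leaf 12],
   Node [Node [Leaf 16, Leaf 16, Leaf 14, Leaf 15], Leaf 13, Leaf 11, Leaf 12], Leaf 9,
   Leaf 10], Leaf 17]], Leaf 6, Leaf 6, Leaf 7], Leaf 3, Leaf 4], Leaf 2, Leaf 2],
   Node [Node [Node [Leaf 6, Node [Leaf 8, Leaf 8, Leaf 8, Node [Leaf 18, Leaf 18,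
   Node [Node [Leaf 13, Node [Leaf 16, Leaf 16, Leaf 14, Leaf 15], Leaf 11, Leaf 12],
   Node [Node [Leaf 16, Leaf 16, Leaf 14, Leaf 15], Leaf 13, Leaf 11, Leaf 12], Leaf 9,
   Leaf 10], Leaf 17]], Leaf 6, Leaf 7], Leaf 5, Leaf 3, Leaf 4], Leaf 2, Leaf 2, Leaf 2],
   Leaf 1, Leaf 1]], Node [Node [Leaf 1, Node [Leaf 2, Leaf 2, Node [Leaf 4, Leaf 5,
   Node [Leaf 7, Node [Node [Leaf 17, Leaf 18, Leaf 18, Node [Leaf 10, Node [Leaf 12, Leaf 13,
   Node [Leaf 15, Leaf 16, Leaf 16, Leaf 14], Leaf 11], Node [Leaf 12, Node [Leaf 15, Leaf 16,
   Leaf 16, Leaf 14], Leaf 13, Leaf 11], Leaf 9]], Leaf 8, Leaf 8, Leaf 8], Leaf 6, Leaf 6],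
   Leaf 3], Leaf 2], Node [Leaf 2, Node [Leaf 4, Node [Leaf 7, Leaf 6, Node [Node [Leaf 17,
   Leaf 18, Leaf 18, Node [Leaf 10, Node [Leaf 12, Leaf 13, Node [Leaf 15, Leaf 16, Leaf 16,
   Leaf 14], Leaf 11], Node [Leaf 12, Node [Leaf 15, Leaf 16, Leaf 16, Leaf 14], Leaf 13,
   Leaf 11], Leaf 9]], Leaf 8, Leaf 8, Leaf 8], Leaf 6], Leaf 5, Leaf 3], Leaf 2, Leaf 2],
   Leaf 1], Node [Node [Leaf 2, Leaf 2, Node [Leaf 5, Leaf 4, Node [Node [Leaf 8, Node [Leaf 18,
   Leaf 17, Leaf 18, Node [Node [Leaf 13, Leaf 12, Node [Leaf 16, Leaf 15, Leaf 16, Leaf 14],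
   Leaf 11], Leaf 10, Node [Node [Leaf 16, Leaf 15, Leaf 16, Leaf 14], Leaf 12, Leaf 13,
   Leaf 11], Leaf 9]], Leaf 8, Leaf 8], Leaf 7, Leaf 6, Leaf 6], Leaf 3], Leaf 2], Leaf 1,
   Node [Node [Node [Leaf 6, Leaf 7, Node [Leaf 8, Node [Leaf 18, Leaf 17, Leaf 18,
   Node [Node [Leaf 13, Leaf 12, Node [Leaf 16, Leaf 15, Leaf 16, Leaf 14], Leaf 11], Leaf 10,
   Node [Node [Leaf 16, Leaf 15, Leaf 16, Leaf 14], Leaf 12, Leaf 13, Leaf 11], Leaf 9]],
   Leaf 8, Leaf 8], Leaf 6], Leaf 4, Leaf 5, Leaf 3], Leaf 2, Leaf 2, Leaf 2], Leaf 1],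
   Node [Node [Leaf 2, Node [Leaf 5, Node [Node [Leaf 8, Leaf 8, Node [Leaf 18, Leaf 18,
   Leaf 17, Node [Node [Leaf 13, Node [Leaf 16, Leaf 16, Leaf 15, Leaf 14], Leaf 12, Leaf 11],
   Node [Node [Leaf 16, Leaf 16, Leaf 15, Leaf 14], Leaf 13, Leaf 12, Leaf 11], Leaf 10,
   Leaf 9]], Leaf 8], Leaf 6, Leaf 7, Leaf 6], Leaf 4, Leaf 3], Leaf 2, Leaf 2],
   Node [Node [Node [Leaf 6, Node [Leaf 8, Leaf 8, Node [Leaf 18, Leaf 18, Leaf 17,
   Node [Node [Leaf 13, Node [Leaf 16, Leaf 16, Leaf 15, Leaf 14], Leaf 12, Leaf 11],
   Node [Node [Leaf 16, Leaf 16, Leaf 15, Leaf 14], Leaf 13, Leaf 12, Leaf 11], Leaf 10,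
   Leaf 9]], Leaf 8], Leaf 7, Leaf 6], Leaf 5, Leaf 4, Leaf 3], Leaf 2, Leaf 2, Leaf 2], Leaf 1,
   Leaf 1], Leaf 0]]"

definition MMS_certs :: "(nat list \<times> nat list \<times> nat) list" where
  "MMS_certs =
  [([9, 9], [1, 2, 1, 1, 1, 1, 1, 1, 1, 1, 1, 1, 1, 1], 9),
   ([9, 9, 9], [1, 2, 3, 1, 1, 1, 1, 1, 1, 1, 1, 1, 1, 1], 9),
   ([9, 9, 9, 9], [1, 2, 3, 4, 1, 1, 1, 1, 1, 1, 1, 1, 1, 1], 9),
   ([9, 4, 4, 4, 4], [1, 2, 2, 3, 3, 1, 1, 1, 1, 1, 1, 1, 1, 1], 9),
   ([9, 9, 4, 4, 4], [1, 2, 3, 3, 4, 1, 1, 1, 1, 1, 1, 1, 1, 1], 9),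
   ([9, 9, 9, 4, 4], [1, 2, 3, 4, 4, 1, 1, 1, 1, 1, 1, 1, 1, 1], 9),
   ([9, 4, 4, 4, 4, 4], [1, 2, 2, 3, 3, 4, 1, 1, 1, 1, 1, 1, 1, 1], 9),
   ([9, 9, 4, 4, 4, 4], [1, 2, 3, 3, 4, 4, 1, 1, 1, 1, 1, 1, 1, 1], 9),
   ([9, 4, 4, 4, 4, 4, 4], [1, 2, 2, 3, 3, 4, 4, 1, 1, 1, 1, 1, 1, 1], 9),
   ([9, 3, 3, 3, 3, 3, 3, 3, 3], [1, 2, 2, 2, 3, 3, 3, 4, 4, 1, 1, 1, 1, 1], 9),
   ([9, 9, 2, 2, 2, 2, 2, 2, 2], [1, 2, 3, 3, 3, 3, 4, 4, 4, 1, 1, 1, 1, 1], 9),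
   ([9, 3, 3, 3, 3, 3, 3, 3, 3, 3], [1, 2, 2, 2, 3, 3, 3, 4, 4, 4, 1, 1, 1, 1], 9),
   ([9, 9, 2, 2, 2, 2, 2, 2, 2, 2], [1, 2, 3, 3, 3, 3, 4, 4, 4, 4, 1, 1, 1, 1], 9),
   ([9, 9, 9, 7, 7, 7, 7, 7, 7, 7], [1, 1, 2, 2, 3, 3, 3, 4, 4, 4, 1, 1, 1, 1], 21),
   ([9, 2, 2, 2, 2, 2, 2, 2, 2, 2, 2], [1, 2, 2, 2, 2, 3, 3, 3, 3, 4, 4, 1, 1, 1], 9),
   ([7, 7, 2, 2, 2, 2, 2, 1, 1, 1, 1], [1, 2, 3, 3, 3, 4, 4, 3, 4, 4, 4, 1, 1, 1], 7),
   ([9, 2, 2, 2, 2, 2, 2, 2, 2, 2, 2, 2], [1, 2, 2, 2, 2, 3, 3, 3, 3, 4, 4, 4, 1, 1], 9),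
   ([9, 2, 2, 2, 2, 2, 2, 2, 2, 2, 2, 2, 2], [1, 2, 2, 2, 2, 3, 3, 3, 3, 4, 4, 4, 4, 1], 9),
   ([7, 7, 1, 1, 1, 1, 1, 1, 1, 1, 1, 1, 1], [1, 2, 3, 3, 3, 3, 3, 3, 3, 4, 4, 4, 4, 1], 7),
   ([9, 9, 9, 9, 9, 9, 9, 9, 9, 7, 7, 7, 7], [1, 1, 1, 2, 2, 2, 3, 3, 3, 4, 4, 4, 4, 1], 28),
   ([9, 3, 3, 3, 3, 3, 3, 3, 1, 1, 1, 1, 1, 1], [1, 2, 2, 2, 3, 3, 3, 4, 4, 4, 4, 4, 4, 4], 9),
   ([7, 7, 1, 1, 1, 1, 1, 1, 1, 1, 1, 1, 1, 1], [1, 2, 3, 3, 3, 3, 3, 3, 3, 4, 4, 4, 4, 4], 7),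
   ([9, 9, 9, 9, 9, 9, 9, 9, 9, 9, 9, 3, 3, 3], [1, 1, 1, 2, 2, 2, 3, 3, 3, 4, 4, 4, 4, 4], 27),
   ([9, 9, 9, 9, 9, 4, 4, 4, 4, 4, 4, 4, 4, 4], [1, 1, 2, 3, 4, 2, 2, 2, 3, 3, 3, 4, 4, 4], 21),
   ([9, 9, 9, 9, 9, 9, 9, 9, 9, 9, 9, 9], [1, 1, 1, 2, 2, 2, 3, 3, 3, 4, 4, 4, 1, 1], 27),
   ([9, 9, 9, 9, 9, 6, 6, 6, 6, 6, 6, 6, 6], [1, 1, 2, 2, 3, 1, 2, 3, 3, 4, 4, 4, 4, 1], 24),
   ([9, 9, 9, 9, 9, 6, 6, 6, 6, 6, 6], [1, 1, 2, 3, 4, 2, 2, 3, 3, 4, 4, 1, 1, 1], 21),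
   ([9, 9, 9, 9, 9, 9, 6, 6, 6, 6, 6, 6, 6], [1, 1, 2, 2, 3, 3, 1, 2, 3, 4, 4, 4, 4, 1], 24),
   ([9, 9, 9, 9, 7, 7, 7, 7, 7, 7], [1, 1, 2, 2, 3, 3, 3, 4, 4, 4, 1, 1, 1, 1], 21),
   ([9, 9, 9, 9, 9, 9, 9, 9], [1, 1, 2, 2, 3, 3, 4, 4, 1, 1, 1, 1, 1, 1], 18),
   ([9, 9, 9, 9, 9, 9, 9], [1, 1, 2, 2, 3, 3, 4, 1, 1, 1, 1, 1, 1, 1], 18),
   ([9, 9, 9, 9, 9, 9], [1, 1, 2, 2, 3, 3, 1, 1, 1, 1, 1, 1, 1, 1], 18)]"

definition MMS_tree :: tree where
  "MMS_tree =
  Node [Node [Leaf 0, Node [Leaf 1, Leaf 1, Node [Leaf 2, Leaf 2, Leaf 2, Node [Leaf 3, Leaf 4,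
   Leaf 5, Node [Leaf 6, Leaf 7, Node [Leaf 8, Node [Node [Leaf 9, Leaf 10, Node [Leaf 11,
   Leaf 12, Leaf 13, Node [Leaf 14, Leaf 15, Node [Leaf 16, Node [Leaf 17, Leaf 18, Leaf 19,
   Node [Leaf 20, Leaf 21, Leaf 22, Leaf 23]], Leaf 24, Node [Leaf 17, Node [Leaf 20, Leaf 21,
   Leaf 22, Leaf 23], Leaf 19, Leaf 25]], Leaf 26]], Node [Leaf 11, Leaf 12, Node [Leaf 14,
   Leaf 15, Node [Leaf 16, Node [Leaf 17, Leaf 18, Leaf 27, Node [Leaf 20, Leaf 21, Leaf 22,
   Leaf 23]], Leaf 24, Node [Leaf 17, Node [Leaf 20, Leaf 21, Leaf 22, Leaf 23], Leaf 27,
   Leaf 19]], Leaf 26], Leaf 28]], Leaf 29, Leaf 29, Leaf 29], Leaf 30, Leaf 30], Leaf 31]]],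
   Node [Leaf 2, Leaf 2, Node [Leaf 3, Leaf 4, Node [Leaf 6, Leaf 7, Leaf 31, Node [Leaf 8,
   Node [Node [Leaf 9, Leaf 10, Node [Leaf 11, Leaf 12, Leaf 28, Node [Leaf 14, Leaf 15,
   Leaf 26, Node [Leaf 16, Node [Leaf 17, Leaf 18, Node [Leaf 20, Leaf 21, Leaf 23, Leaf 22],
   Leaf 27], Node [Leaf 17, Node [Leaf 20, Leaf 21, Leaf 23, Leaf 22], Leaf 19, Leaf 27],
   Leaf 24]]], Node [Leaf 11, Leaf 12, Node [Leaf 14, Leaf 15, Leaf 26, Node [Leaf 16,
   Node [Leaf 17, Leaf 18, Node [Leaf 20, Leaf 21, Leaf 23, Leaf 22], Leaf 19], Node [Leaf 17,
   Node [Leaf 20, Leaf 21, Leaf 23, Leaf 22], Leaf 25, Leaf 19], Leaf 24]], Leaf 13]], Leaf 29,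
   Leaf 29, Leaf 29], Leaf 30, Leaf 30]], Leaf 5], Leaf 2]], Node [Leaf 1, Node [Leaf 2, Leaf 2,
   Leaf 2, Node [Leaf 3, Leaf 5, Leaf 4, Node [Leaf 6, Node [Leaf 8, Leaf 30,
   Node [Node [Leaf 9, Node [Leaf 11, Leaf 13, Leaf 12, Node [Leaf 14, Node [Leaf 16, Leaf 24,
   Node [Leaf 17, Leaf 19, Leaf 18, Node [Leaf 20, Leaf 22, Leaf 21, Leaf 23]], Node [Leaf 17,
   Leaf 19, Node [Leaf 20, Leaf 22, Leaf 21, Leaf 23], Leaf 25]], Leaf 15, Leaf 26]], Leaf 10,
   Node [Leaf 11, Node [Leaf 14, Node [Leaf 16, Leaf 24, Node [Leaf 17, Leaf 27, Leaf 18,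
   Node [Leaf 20, Leaf 22, Leaf 21, Leaf 23]], Node [Leaf 17, Leaf 27, Node [Leaf 20, Leaf 22,
   Leaf 21, Leaf 23], Leaf 19]], Leaf 15, Leaf 26], Leaf 12, Leaf 28]], Leaf 29, Leaf 29,
   Leaf 29], Leaf 30], Leaf 7, Leaf 31]]], Leaf 1, Node [Leaf 2, Node [Leaf 3, Node [Leaf 6,
   Leaf 31, Leaf 7, Node [Leaf 8, Leaf 30, Node [Node [Leaf 9, Node [Leaf 11, Leaf 28, Leaf 12,
   Node [Leaf 14, Leaf 26, Leaf 15, Node [Leaf 16, Node [Leaf 17, Leaf 19, Node [Leaf 20,
   Leaf 23, Leaf 21, Leaf 22], Leaf 27], Node [Leaf 17, Node [Leaf 20, Leaf 23, Leaf 21,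
   Leaf 22], Leaf 18, Leaf 27], Leaf 24]]], Leaf 10, Node [Leaf 11, Node [Leaf 14, Leaf 26,
   Leaf 15, Node [Leaf 16, Node [Leaf 17, Leaf 25, Node [Leaf 20, Leaf 23, Leaf 21, Leaf 22],
   Leaf 19], Node [Leaf 17, Node [Leaf 20, Leaf 23, Leaf 21, Leaf 22], Leaf 18, Leaf 19],
   Leaf 24]], Leaf 12, Leaf 13]], Leaf 29, Leaf 29, Leaf 29], Leaf 30]], Leaf 4, Leaf 5],
   Leaf 2, Leaf 2]], Node [Leaf 1, Node [Leaf 2, Leaf 2, Node [Leaf 3, Leaf 5, Node [Leaf 6,
   Node [Leaf 8, Leaf 30, Leaf 30, Node [Node [Leaf 9, Node [Leaf 11, Leaf 13, Node [Leaf 14,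
   Node [Leaf 16, Leaf 24, Node [Leaf 17, Leaf 19, Leaf 25, Node [Leaf 20, Leaf 22, Leaf 23,
   Leaf 21]], Node [Leaf 17, Leaf 19, Node [Leaf 20, Leaf 22, Leaf 23, Leaf 21], Leaf 18]],
   Leaf 26, Leaf 15], Leaf 12], Node [Leaf 11, Node [Leaf 14, Node [Leaf 16, Leaf 24,
   Node [Leaf 17, Leaf 27, Leaf 19, Node [Leaf 20, Leaf 22, Leaf 23, Leaf 21]], Node [Leaf 17,
   Leaf 27, Node [Leaf 20, Leaf 22, Leaf 23, Leaf 21], Leaf 18]], Leaf 26, Leaf 15], Leaf 28,
   Leaf 12], Leaf 10], Leaf 29, Leaf 29, Leaf 29]], Leaf 31, Leaf 7], Leaf 4], Leaf 2],
   Node [Leaf 2, Node [Leaf 3, Node [Leaf 6, Leaf 31, Node [Leaf 8, Leaf 30, Leaf 30,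
   Node [Node [Leaf 9, Node [Leaf 11, Leaf 28, Node [Leaf 14, Leaf 26, Node [Leaf 16,
   Node [Leaf 17, Leaf 19, Leaf 27, Node [Leaf 20, Leaf 23, Leaf 22, Leaf 21]], Leaf 24,
   Node [Leaf 17, Node [Leaf 20, Leaf 23, Leaf 22, Leaf 21], Leaf 27, Leaf 18]], Leaf 15],
   Leaf 12], Node [Leaf 11, Node [Leaf 14, Leaf 26, Node [Leaf 16, Node [Leaf 17, Leaf 25,
   Leaf 19, Node [Leaf 20, Leaf 23, Leaf 22, Leaf 21]], Leaf 24, Node [Leaf 17, Node [Leaf 20,
   Leaf 23, Leaf 22, Leaf 21], Leaf 19, Leaf 18]], Leaf 15], Leaf 13, Leaf 12], Leaf 10],
   Leaf 29, Leaf 29, Leaf 29]], Leaf 7], Leaf 5, Leaf 4], Leaf 2, Leaf 2], Leaf 1]],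
   Node [Node [Leaf 1, Leaf 1, Node [Leaf 2, Leaf 2, Leaf 2, Node [Leaf 4, Leaf 3, Leaf 5,
   Node [Leaf 7, Leaf 6, Node [Node [Leaf 29, Node [Leaf 10, Leaf 9, Node [Leaf 12, Leaf 11,
   Leaf 13, Node [Leaf 15, Leaf 14, Node [Node [Leaf 18, Leaf 17, Leaf 19, Node [Leaf 21,
   Leaf 20, Leaf 22, Leaf 23]], Leaf 16, Leaf 24, Node [Node [Leaf 21, Leaf 20, Leaf 22,
   Leaf 23], Leaf 17, Leaf 19, Leaf 25]], Leaf 26]], Node [Leaf 12, Leaf 11, Node [Leaf 15,
   Leaf 14, Node [Node [Leaf 18, Leaf 17, Leaf 27, Node [Leaf 21, Leaf 20, Leaf 22, Leaf 23]],
   Leaf 16, Leaf 24, Node [Node [Leaf 21, Leaf 20, Leaf 22, Leaf 23], Leaf 17, Leaf 27,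
   Leaf 19]], Leaf 26], Leaf 28]], Leaf 29, Leaf 29], Leaf 8, Leaf 30, Leaf 30], Leaf 31]]],
   Node [Leaf 2, Leaf 2, Node [Leaf 4, Leaf 3, Node [Leaf 7, Leaf 6, Leaf 31,
   Node [Node [Leaf 29, Node [Leaf 10, Leaf 9, Node [Leaf 12, Leaf 11, Leaf 28, Node [Leaf 15,
   Leaf 14, Leaf 26, Node [Node [Leaf 18, Leaf 17, Node [Leaf 21, Leaf 20, Leaf 23, Leaf 22],
   Leaf 27], Leaf 16, Node [Node [Leaf 21, Leaf 20, Leaf 23, Leaf 22], Leaf 17, Leaf 19,
   Leaf 27], Leaf 24]]], Node [Leaf 12, Leaf 11, Node [Leaf 15, Leaf 14, Leaf 26,
   Node [Node [Leaf 18, Leaf 17, Node [Leaf 21, Leaf 20, Leaf 23, Leaf 22], Leaf 19], Leaf 16,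
   Node [Node [Leaf 21, Leaf 20, Leaf 23, Leaf 22], Leaf 17, Leaf 25, Leaf 19], Leaf 24]],
   Leaf 13]], Leaf 29, Leaf 29], Leaf 8, Leaf 30, Leaf 30]], Leaf 5], Leaf 2]], Leaf 0,
   Node [Node [Leaf 2, Leaf 2, Leaf 2, Node [Leaf 5, Leaf 3, Leaf 4, Node [Node [Leaf 30,
   Leaf 8, Node [Leaf 29, Node [Node [Leaf 13, Leaf 11, Leaf 12, Node [Node [Leaf 24, Leaf 16,
   Node [Leaf 19, Leaf 17, Leaf 18, Node [Leaf 22, Leaf 20, Leaf 21, Leaf 23]], Node [Leaf 19,
   Leaf 17, Node [Leaf 22, Leaf 20, Leaf 21, Leaf 23], Leaf 25]], Leaf 14, Leaf 15, Leaf 26]],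
   Leaf 9, Leaf 10, Node [Node [Node [Leaf 24, Leaf 16, Node [Leaf 27, Leaf 17, Leaf 18,
   Node [Leaf 22, Leaf 20, Leaf 21, Leaf 23]], Node [Leaf 27, Leaf 17, Node [Leaf 22, Leaf 20,
   Leaf 21, Leaf 23], Leaf 19]], Leaf 14, Leaf 15, Leaf 26], Leaf 11, Leaf 12, Leaf 28]],
   Leaf 29, Leaf 29], Leaf 30], Leaf 6, Leaf 7, Leaf 31]]], Leaf 1, Leaf 1,
   Node [Node [Node [Leaf 31, Leaf 6, Leaf 7, Node [Leaf 30, Leaf 8, Node [Leaf 29,
   Node [Node [Leaf 28, Leaf 11, Leaf 12, Node [Leaf 26, Leaf 14, Leaf 15, Node [Node [Leaf 19,
   Leaf 17, Node [Leaf 23, Leaf 20, Leaf 21, Leaf 22], Leaf 27], Leaf 16, Node [Node [Leaf 23,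
   Leaf 20, Leaf 21, Leaf 22], Leaf 17, Leaf 18, Leaf 27], Leaf 24]]], Leaf 9, Leaf 10,
   Node [Node [Leaf 26, Leaf 14, Leaf 15, Node [Node [Leaf 25, Leaf 17, Node [Leaf 23, Leaf 20,
   Leaf 21, Leaf 22], Leaf 19], Leaf 16, Node [Node [Leaf 23, Leaf 20, Leaf 21, Leaf 22],
   Leaf 17, Leaf 18, Leaf 19], Leaf 24]], Leaf 11, Leaf 12, Leaf 13]], Leaf 29, Leaf 29],
   Leaf 30]], Leaf 3, Leaf 4, Leaf 5], Leaf 2, Leaf 2, Leaf 2]], Node [Node [Leaf 2, Leaf 2,
   Node [Leaf 5, Leaf 3, Node [Node [Leaf 30, Leaf 8, Leaf 30, Node [Leaf 29,
   Node [Node [Leaf 13, Leaf 11, Node [Node [Leaf 24, Leaf 16, Node [Leaf 19, Leaf 17, Leaf 25,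
   Node [Leaf 22, Leaf 20, Leaf 23, Leaf 21]], Node [Leaf 19, Leaf 17, Node [Leaf 22, Leaf 20,
   Leaf 23, Leaf 21], Leaf 18]], Leaf 14, Leaf 26, Leaf 15], Leaf 12], Leaf 9,
   Node [Node [Node [Leaf 24, Leaf 16, Node [Leaf 27, Leaf 17, Leaf 19, Node [Leaf 22, Leaf 20,
   Leaf 23, Leaf 21]], Node [Leaf 27, Leaf 17, Node [Leaf 22, Leaf 20, Leaf 23, Leaf 21],
   Leaf 18]], Leaf 14, Leaf 26, Leaf 15], Leaf 11, Leaf 28, Leaf 12], Leaf 10], Leaf 29,
   Leaf 29]], Leaf 6, Leaf 31, Leaf 7], Leaf 4], Leaf 2], Leaf 1, Node [Node [Node [Leaf 31,
   Leaf 6, Node [Leaf 30, Leaf 8, Leaf 30, Node [Leaf 29, Node [Node [Leaf 28, Leaf 11,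
   Node [Leaf 26, Leaf 14, Node [Node [Leaf 19, Leaf 17, Leaf 27, Node [Leaf 23, Leaf 20,
   Leaf 22, Leaf 21]], Leaf 16, Leaf 24, Node [Node [Leaf 23, Leaf 20, Leaf 22, Leaf 21],
   Leaf 17, Leaf 27, Leaf 18]], Leaf 15], Leaf 12], Leaf 9, Node [Node [Leaf 26, Leaf 14,
   Node [Node [Leaf 25, Leaf 17, Leaf 19, Node [Leaf 23, Leaf 20, Leaf 22, Leaf 21]], Leaf 16,
   Leaf 24, Node [Node [Leaf 23, Leaf 20, Leaf 22, Leaf 21], Leaf 17, Leaf 19, Leaf 18]],
   Leaf 15], Leaf 11, Leaf 13, Leaf 12], Leaf 10], Leaf 29, Leaf 29]], Leaf 7], Leaf 3, Leaf 5,
   Leaf 4], Leaf 2, Leaf 2, Leaf 2], Leaf 1]], Node [Node [Leaf 1, Node [Leaf 2, Leaf 2, Leaf 2,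
   Node [Leaf 4, Leaf 5, Leaf 3, Node [Leaf 7, Node [Node [Leaf 29, Leaf 29, Node [Leaf 10,
   Node [Leaf 12, Leaf 13, Leaf 11, Node [Leaf 15, Node [Node [Leaf 18, Leaf 19, Leaf 17,
   Node [Leaf 21, Leaf 22, Leaf 20, Leaf 23]], Leaf 24, Leaf 16, Node [Node [Leaf 21, Leaf 22,
   Leaf 20, Leaf 23], Leaf 19, Leaf 17, Leaf 25]], Leaf 14, Leaf 26]], Leaf 9, Node [Leaf 12,
   Node [Leaf 15, Node [Node [Leaf 18, Leaf 27, Leaf 17, Node [Leaf 21, Leaf 22, Leaf 20,
   Leaf 23]], Leaf 24, Leaf 16, Node [Node [Leaf 21, Leaf 22, Leaf 20, Leaf 23], Leaf 27,
   Leaf 17, Leaf 19]], Leaf 14, Leaf 26], Leaf 11, Leaf 28]], Leaf 29], Leaf 30, Leaf 8,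
   Leaf 30], Leaf 6, Leaf 31]]], Leaf 1, Node [Leaf 2, Node [Leaf 4, Node [Leaf 7, Leaf 31,
   Leaf 6, Node [Node [Leaf 29, Leaf 29, Node [Leaf 10, Node [Leaf 12, Leaf 28, Leaf 11,
   Node [Leaf 15, Leaf 26, Leaf 14, Node [Node [Leaf 18, Node [Leaf 21, Leaf 23, Leaf 20,
   Leaf 22], Leaf 17, Leaf 27], Node [Node [Leaf 21, Leaf 23, Leaf 20, Leaf 22], Leaf 19,
   Leaf 17, Leaf 27], Leaf 16, Leaf 24]]], Leaf 9, Node [Leaf 12, Node [Leaf 15, Leaf 26,
   Leaf 14, Node [Node [Leaf 18, Node [Leaf 21, Leaf 23, Leaf 20, Leaf 22], Leaf 17, Leaf 19],
   Node [Node [Leaf 21, Leaf 23, Leaf 20, Leaf 22], Leaf 25, Leaf 17, Leaf 19], Leaf 16,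
   Leaf 24]], Leaf 11, Leaf 13]], Leaf 29], Leaf 30, Leaf 8, Leaf 30]], Leaf 3, Leaf 5], Leaf 2,
   Leaf 2]], Node [Node [Leaf 2, Leaf 2, Leaf 2, Node [Leaf 5, Leaf 4, Leaf 3,
   Node [Node [Leaf 30, Node [Leaf 29, Leaf 29, Node [Node [Leaf 13, Leaf 12, Leaf 11,
   Node [Node [Leaf 24, Node [Leaf 19, Leaf 18, Leaf 17, Node [Leaf 22, Leaf 21, Leaf 20,
   Leaf 23]], Leaf 16, Node [Leaf 19, Node [Leaf 22, Leaf 21, Leaf 20, Leaf 23], Leaf 17,
   Leaf 25]], Leaf 15, Leaf 14, Leaf 26]], Leaf 10, Leaf 9, Node [Node [Node [Leaf 24,
   Node [Leaf 27, Leaf 18, Leaf 17, Node [Leaf 22, Leaf 21, Leaf 20, Leaf 23]], Leaf 16,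
   Node [Leaf 27, Node [Leaf 22, Leaf 21, Leaf 20, Leaf 23], Leaf 17, Leaf 19]], Leaf 15,
   Leaf 14, Leaf 26], Leaf 12, Leaf 11, Leaf 28]], Leaf 29], Leaf 8, Leaf 30], Leaf 7, Leaf 6,
   Leaf 31]]], Leaf 1, Leaf 1, Node [Node [Node [Leaf 31, Leaf 7, Leaf 6, Node [Leaf 30,
   Node [Leaf 29, Leaf 29, Node [Node [Leaf 28, Leaf 12, Leaf 11, Node [Leaf 26, Leaf 15,
   Leaf 14, Node [Node [Leaf 19, Node [Leaf 23, Leaf 21, Leaf 20, Leaf 22], Leaf 17, Leaf 27],
   Node [Node [Leaf 23, Leaf 21, Leaf 20, Leaf 22], Leaf 18, Leaf 17, Leaf 27], Leaf 16,
   Leaf 24]]], Leaf 10, Leaf 9, Node [Node [Leaf 26, Leaf 15, Leaf 14, Node [Node [Leaf 25,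
   Node [Leaf 23, Leaf 21, Leaf 20, Leaf 22], Leaf 17, Leaf 19], Node [Node [Leaf 23, Leaf 21,
   Leaf 20, Leaf 22], Leaf 18, Leaf 17, Leaf 19], Leaf 16, Leaf 24]], Leaf 12, Leaf 11,
   Leaf 13]], Leaf 29], Leaf 8, Leaf 30]], Leaf 4, Leaf 3, Leaf 5], Leaf 2, Leaf 2, Leaf 2]],
   Leaf 0, Node [Node [Leaf 2, Node [Leaf 5, Node [Node [Leaf 30, Leaf 30, Leaf 8,
   Node [Leaf 29, Leaf 29, Node [Node [Leaf 13, Node [Node [Leaf 24, Node [Leaf 19, Leaf 25,
   Leaf 17, Node [Leaf 22, Leaf 23, Leaf 20, Leaf 21]], Leaf 16, Node [Leaf 19, Node [Leaf 22,
   Leaf 23, Leaf 20, Leaf 21], Leaf 17, Leaf 18]], Leaf 26, Leaf 14, Leaf 15], Leaf 11,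
   Leaf 12], Node [Node [Node [Leaf 24, Node [Leaf 27, Leaf 19, Leaf 17, Node [Leaf 22, Leaf 23,
   Leaf 20, Leaf 21]], Leaf 16, Node [Leaf 27, Node [Leaf 22, Leaf 23, Leaf 20, Leaf 21],
   Leaf 17, Leaf 18]], Leaf 26, Leaf 14, Leaf 15], Leaf 28, Leaf 11, Leaf 12], Leaf 9, Leaf 10],
   Leaf 29]], Leaf 31, Leaf 6, Leaf 7], Leaf 3, Leaf 4], Leaf 2, Leaf 2],
   Node [Node [Node [Leaf 31, Node [Leaf 30, Leaf 30, Leaf 8, Node [Leaf 29, Leaf 29,
   Node [Node [Leaf 28, Node [Leaf 26, Node [Node [Leaf 19, Leaf 27, Leaf 17, Node [Leaf 23,
   Leaf 22, Leaf 20, Leaf 21]], Leaf 24, Leaf 16, Node [Node [Leaf 23, Leaf 22, Leaf 20,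
   Leaf 21], Leaf 27, Leaf 17, Leaf 18]], Leaf 14, Leaf 15], Leaf 11, Leaf 12],
   Node [Node [Leaf 26, Node [Node [Leaf 25, Leaf 19, Leaf 17, Node [Leaf 23, Leaf 22, Leaf 20,
   Leaf 21]], Leaf 24, Leaf 16, Node [Node [Leaf 23, Leaf 22, Leaf 20, Leaf 21], Leaf 19,
   Leaf 17, Leaf 18]], Leaf 14, Leaf 15], Leaf 13, Leaf 11, Leaf 12], Leaf 9, Leaf 10],
   Leaf 29]], Leaf 6, Leaf 7], Leaf 5, Leaf 3, Leaf 4], Leaf 2, Leaf 2, Leaf 2], Leaf 1,
   Leaf 1]], Node [Node [Leaf 1, Node [Leaf 2, Leaf 2, Node [Leaf 4, Leaf 5, Node [Leaf 7,
   Node [Node [Leaf 29, Leaf 29, Leaf 29, Node [Leaf 10, Node [Leaf 12, Leaf 13, Node [Leaf 15,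
   Node [Node [Leaf 18, Leaf 19, Node [Leaf 21, Leaf 22, Leaf 23, Leaf 20], Leaf 17], Leaf 24,
   Node [Node [Leaf 21, Leaf 22, Leaf 23, Leaf 20], Leaf 19, Leaf 25, Leaf 17], Leaf 16],
   Leaf 26, Leaf 14], Leaf 11], Node [Leaf 12, Node [Leaf 15, Node [Node [Leaf 18, Leaf 27,
   Node [Leaf 21, Leaf 22, Leaf 23, Leaf 20], Leaf 17], Leaf 24, Node [Node [Leaf 21, Leaf 22,
   Leaf 23, Leaf 20], Leaf 27, Leaf 19, Leaf 17], Leaf 16], Leaf 26, Leaf 14], Leaf 28,
   Leaf 11], Leaf 9]], Leaf 30, Leaf 30, Leaf 8], Leaf 31, Leaf 6], Leaf 3], Leaf 2],
   Node [Leaf 2, Node [Leaf 4, Node [Leaf 7, Leaf 31, Node [Node [Leaf 29, Leaf 29, Leaf 29,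
   Node [Leaf 10, Node [Leaf 12, Leaf 28, Node [Leaf 15, Leaf 26, Node [Node [Leaf 18,
   Node [Leaf 21, Leaf 23, Leaf 22, Leaf 20], Leaf 27, Leaf 17], Node [Node [Leaf 21, Leaf 23,
   Leaf 22, Leaf 20], Leaf 19, Leaf 27, Leaf 17], Leaf 24, Leaf 16], Leaf 14], Leaf 11],
   Node [Leaf 12, Node [Leaf 15, Leaf 26, Node [Node [Leaf 18, Node [Leaf 21, Leaf 23, Leaf 22,
   Leaf 20], Leaf 19, Leaf 17], Node [Node [Leaf 21, Leaf 23, Leaf 22, Leaf 20], Leaf 25,
   Leaf 19, Leaf 17], Leaf 24, Leaf 16], Leaf 14], Leaf 13, Leaf 11], Leaf 9]], Leaf 30,
   Leaf 30, Leaf 8], Leaf 6], Leaf 5, Leaf 3], Leaf 2, Leaf 2], Leaf 1], Node [Node [Leaf 2,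
   Leaf 2, Node [Leaf 5, Leaf 4, Node [Node [Leaf 30, Node [Leaf 29, Leaf 29, Leaf 29,
   Node [Node [Leaf 13, Leaf 12, Node [Node [Leaf 24, Node [Leaf 19, Leaf 18, Node [Leaf 22,
   Leaf 21, Leaf 23, Leaf 20], Leaf 17], Node [Leaf 19, Node [Leaf 22, Leaf 21, Leaf 23,
   Leaf 20], Leaf 25, Leaf 17], Leaf 16], Leaf 15, Leaf 26, Leaf 14], Leaf 11], Leaf 10,
   Node [Node [Node [Leaf 24, Node [Leaf 27, Leaf 18, Node [Leaf 22, Leaf 21, Leaf 23, Leaf 20],
   Leaf 17], Node [Leaf 27, Node [Leaf 22, Leaf 21, Leaf 23, Leaf 20], Leaf 19, Leaf 17],
   Leaf 16], Leaf 15, Leaf 26, Leaf 14], Leaf 12, Leaf 28, Leaf 11], Leaf 9]], Leaf 30, Leaf 8],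
   Leaf 7, Leaf 31, Leaf 6], Leaf 3], Leaf 2], Leaf 1, Node [Node [Node [Leaf 31, Leaf 7,
   Node [Leaf 30, Node [Leaf 29, Leaf 29, Leaf 29, Node [Node [Leaf 28, Leaf 12, Node [Leaf 26,
   Leaf 15, Node [Node [Leaf 19, Node [Leaf 23, Leaf 21, Leaf 22, Leaf 20], Leaf 27, Leaf 17],
   Node [Node [Leaf 23, Leaf 21, Leaf 22, Leaf 20], Leaf 18, Leaf 27, Leaf 17], Leaf 24,
   Leaf 16], Leaf 14], Leaf 11], Leaf 10, Node [Node [Leaf 26, Leaf 15, Node [Node [Leaf 25,
   Node [Leaf 23, Leaf 21, Leaf 22, Leaf 20], Leaf 19, Leaf 17], Node [Node [Leaf 23, Leaf 21,
   Leaf 22, Leaf 20], Leaf 18, Leaf 19, Leaf 17], Leaf 24, Leaf 16], Leaf 14], Leaf 12, Leaf 13,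
   Leaf 11], Leaf 9]], Leaf 30, Leaf 8], Leaf 6], Leaf 4, Leaf 5, Leaf 3], Leaf 2, Leaf 2,
   Leaf 2], Leaf 1], Node [Node [Leaf 2, Node [Leaf 5, Node [Node [Leaf 30, Leaf 30,
   Node [Leaf 29, Leaf 29, Leaf 29, Node [Node [Leaf 13, Node [Node [Leaf 24, Node [Leaf 19,
   Leaf 25, Node [Leaf 22, Leaf 23, Leaf 21, Leaf 20], Leaf 17], Node [Leaf 19, Node [Leaf 22,
   Leaf 23, Leaf 21, Leaf 20], Leaf 18, Leaf 17], Leaf 16], Leaf 26, Leaf 15, Leaf 14], Leaf 12,
   Leaf 11], Node [Node [Node [Leaf 24, Node [Leaf 27, Leaf 19, Node [Leaf 22, Leaf 23, Leaf 21,
   Leaf 20], Leaf 17], Node [Leaf 27, Node [Leaf 22, Leaf 23, Leaf 21, Leaf 20], Leaf 18,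
   Leaf 17], Leaf 16], Leaf 26, Leaf 15, Leaf 14], Leaf 28, Leaf 12, Leaf 11], Leaf 10,
   Leaf 9]], Leaf 8], Leaf 31, Leaf 7, Leaf 6], Leaf 4, Leaf 3], Leaf 2, Leaf 2],
   Node [Node [Node [Leaf 31, Node [Leaf 30, Leaf 30, Node [Leaf 29, Leaf 29, Leaf 29,
   Node [Node [Leaf 28, Node [Leaf 26, Node [Node [Leaf 19, Leaf 27, Node [Leaf 23, Leaf 22,
   Leaf 21, Leaf 20], Leaf 17], Leaf 24, Node [Node [Leaf 23, Leaf 22, Leaf 21, Leaf 20],
   Leaf 27, Leaf 18, Leaf 17], Leaf 16], Leaf 15, Leaf 14], Leaf 12, Leaf 11],
   Node [Node [Leaf 26, Node [Node [Leaf 25, Leaf 19, Node [Leaf 23, Leaf 22, Leaf 21, Leaf 20],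
   Leaf 17], Leaf 24, Node [Node [Leaf 23, Leaf 22, Leaf 21, Leaf 20], Leaf 19, Leaf 18,
   Leaf 17], Leaf 16], Leaf 15, Leaf 14], Leaf 13, Leaf 12, Leaf 11], Leaf 10, Leaf 9]],
   Leaf 8], Leaf 7, Leaf 6], Leaf 5, Leaf 4, Leaf 3], Leaf 2, Leaf 2, Leaf 2], Leaf 1, Leaf 1],
   Leaf 0]]"

lemma r_nm_4_11_ge: "ereal (13/9) \<le> r_nm 4 11"
proof -
  have "covers 4 (CS_witness 13 9 4) CS_costs 11 CS_tree []"
    by code_simp
  from r_nm_ge_if_covers[OF this] show ?thesis
    by simp
qed

lemma rho_nm_4_14_ge: "ereal (10/7) \<le> rho_nm 4 14"
proof -
  have "list_all (MMS_bound 4 14) MMS_certs"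
    by code_simp
  moreover have "covers 4 (MMS_witness 10 7) MMS_certs 14 MMS_tree []"
    by code_simp
  ultimately show ?thesis
    using rho_nm_ge_if_covers[of 4 14 MMS_certs 10 7 MMS_tree] by simp
qed

theorem proposition3:
  shows "r_hat_n 4 = ereal (13/9) \<and> r_n 4 = ereal (13/9) \<and> rho_n 4 \<ge> ereal (10/7)"
proof (intro conjI)
  show "r_hat_n 4 = ereal (13/9)"
  proof (rule antisym)
    show "r_hat_n 4 \<le> ereal (13/9)"
      unfolding r_hat_n_def by (rule SUP_least) (simp add: r_hat_nm_4_le)
    have "ereal (13/9) \<le> r_hat_nm 4 11"
      using r_nm_4_11_ge r_nm_le_r_hat_nm order_trans by blast
    then show "ereal (13/9) \<le> r_hat_n 4"
      unfolding r_hat_n_def by (rule SUP_upper2[rotated]) simp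
  qed
  show "r_n 4 = ereal (13/9)"
  proof (rule antisym)
    show "r_n 4 \<le> ereal (13/9)"
      unfolding r_n_def by (rule SUP_least) (rule r_nm_4_le)
    show "ereal (13/9) \<le> r_n 4"
      unfolding r_n_def using r_nm_4_11_ge by (rule SUP_upper2[rotated]) simp
  qed
  show "ereal (10/7) \<le> rho_n 4"
    unfolding rho_n_def using rho_nm_4_14_ge by (rule SUP_upper2[rotated]) simp
qed

end
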